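(* Let $1<p_1,\ldots,p_m<\infty$ and $f\in\mathbb{R}^{d_1\times\cdots\times d_m}$. If $f\ne0$, then $\mathfrak G(f)\ne\emptyset$ and every $\lambda\in\mathfrak G(f)$ satisfies $$0<\lambda\le\min_{i\in[m]}\max_{l_i\in[d_i]}d_i^{1/p_i'}\,\partial_{i,l_i}\tilde f(\mathbf e),$$ where $\mathbf e=(1,1,\ldots,1)\in\mathcal R^d$ and $\tilde f=|f|$ is the tensor with entries $|f_{j_1,\ldots,j_m}|$.
   Context: $f$ is identified with the multilinear form $f(\mathbf x_1,\ldots,\mathbf x_m)=\sum_{j_1,\ldots,j_m}f_{j_1,\ldots,j_m}x_{1,j_1}\cdots x_{m,j_m}$ on $\mathcal R^d=\mathbb{R}^{d_1}\times\cdots\times\mathbb{R}^{d_m}$; $\partial_{i,l}=\partial/\partial x_{i,l}$, $\nabla_if(\mathbf x)\in\mathbb{R}^{d_i}$ the vector of $\partial_{i,l}f(\mathbf x)$. $p'=p/(p-1)$; $\psi_q(\mathbf y)_j=|y_j|^{q-1}\mathrm{sign}(y_j)$. $\mathcal S^d=\{\mathbf x\in\mathcal R^d:\|\mathbf x_k\|_{p_k}=1\ \forall k\}$. $\sigma_i(\mathbf x)=\mathrm{sign}(f(\mathbf x))\,\psi_{p_i'}(\nabla_if(\mathbf x))$. $\mathfrak G(f)=\{\lambda\in\mathbb{R}\setminus\{0\}:\exists\mathbf x\in\mathcal S^d\text{ with }\sigma_i(\mathbf x)=\lambda^{p_i'-1}\mathbf x_i\ \forall i\in[m]\}$ (the set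 of critical values of $Q(\mathbf x)=|f(\mathbf x)|/\prod_k\|\mathbf x_k\|_{p_k}$). *)

theory Defs
  imports "HOL-Analysis.Analysis"
begin

text \<open>Order-m tensors with dimensions d 0, ..., d (m-1) (0-based indices).
  A multi-index is a function j in PiE {..<m} (\<lambda>i. {..<d i}); a tensor is a function
  f from multi-indices to reals (values outside the index set are irrelevant).
  A point of R^d = R^{d_1} x ... x R^{d_m} is x :: nat => nat => real, with
  component x i l for i < m, l < d i.\<close>

definition tidx :: "nat \<Rightarrow> (nat \<Rightarrow> nat) \<Rightarrow> (nat \<Rightarrow> nat) set" where
  "tidx m d = PiE {..<m} (\<lambda>i. {..<d i})"

definition mlf :: "nat \<Rightarrow> (nat \<Rightarrow> nat) \<Rightarrow> ((nat \<Rightarrow> nat) \<Rightarrow> real) \<Rightarrow> (nat \<Rightarrow> nat \<Rightarrow> real) \<Rightarrow> real" where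
  "mlf m d f x = (\<Sum>j\<in>tidx m d. f j * (\<Prod>i<m. x i (j i)))"

definition pder :: "nat \<Rightarrow> (nat \<Rightarrow> nat) \<Rightarrow> ((nat \<Rightarrow> nat) \<Rightarrow> real) \<Rightarrow> nat \<Rightarrow> nat \<Rightarrow> (nat \<Rightarrow> nat \<Rightarrow> real) \<Rightarrow> real" where
  "pder m d f i l x = deriv (\<lambda>t. mlf m d f (x(i := (x i)(l := t)))) (x i l)"

definition conj_exp :: "real \<Rightarrow> real" where
  "conj_exp p = p / (p - 1)"

definition psi :: "real \<Rightarrow> real \<Rightarrow> real" where
  "psi q y = \<bar>y\<bar> powr (q - 1) * sgn y"

definition pnorm :: "real \<Rightarrow> nat \<Rightarrow> (nat \<Rightarrow> real) \<Rightarrow> real" where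
  "pnorm p n y = (\<Sum>l<n. \<bar>y l\<bar> powr p) powr (1 / p)"

definition sphere_set :: "nat \<Rightarrow> (nat \<Rightarrow> nat) \<Rightarrow> (nat \<Rightarrow> real) \<Rightarrow> (nat \<Rightarrow> nat \<Rightarrow> real) set" where
  "sphere_set m d p = {x. \<forall>k<m. pnorm (p k) (d k) (x k) = 1}"

definition sigma :: "nat \<Rightarrow> (nat \<Rightarrow> nat) \<Rightarrow> (nat \<Rightarrow> real) \<Rightarrow> ((nat \<Rightarrow> nat) \<Rightarrow> real) \<Rightarrow> nat \<Rightarrow> (nat \<Rightarrow> nat \<Rightarrow> real) \<Rightarrow> nat \<Rightarrow> real" where
  "sigma m d p f i x l = sgn (mlf m d f x) * psi (conj_exp (p i)) (pder m d f i l x)"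

text \<open>The set of critical values G(f). The power lambda^(p_i'-1) is read as the
  odd (signed) power psi_{p_i'}(lambda) = |lambda|^(p_i'-1) sign lambda, which agrees
  with the usual power for lambda > 0.\<close>
definition crit_vals :: "nat \<Rightarrow> (nat \<Rightarrow> nat) \<Rightarrow> (nat \<Rightarrow> real) \<Rightarrow> ((nat \<Rightarrow> nat) \<Rightarrow> real) \<Rightarrow> real set" where
  "crit_vals m d p f = {lam. lam \<noteq> 0 \<and> (\<exists>x\<in>sphere_set m d p.
      \<forall>i<m. \<forall>l<d i. sigma m d p f i x l = psi (conj_exp (p i)) lam * x i l)}"

end

theory Submission
  imports Defs
begin

text \<open>The multilinear form is continuous on the compact product of unit spheres, so it attains
  a maximum F, which is positive because f is nonzero (evaluate at a product of unit vectors).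
  Moving a single coordinate x(i,l) and renormalising row i stays on the sphere, so Fermat's rule
  gives the Lagrange condition \<open>\<partial>(i,l) f(x) = F * psi (p i) (x(i,l))\<close>; as \<open>psi (conj_exp (p i))\<close>
  inverts \<open>psi (p i)\<close>, F is a critical value.
  Conversely, pairing the critical equations of row i with x(i) and using Euler's identity
  \<open>\<Sum>l. x(i,l) \<partial>(i,l) f(x) = f(x)\<close> shows that every critical value equals |f(x)|. This is at most
  |f| evaluated at |x(i)| in row i and at 1 elsewhere, hence at most
  \<open>(max l. \<partial>(i,l) |f|(e)) * \<Sum>l. |x(i,l)|\<close>, and \<open>\<Sum>l. |x(i,l)| \<le> d(i) powr (1 / conj_exp (p i))\<close>
  by H\<ouml>lder's inequality.\<close>

lemma conj_exp_gt_1: "1 < p \<Longrightarrow> 1 < conj_exp p"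
  by (simp add: conj_exp_def)

lemma conj_exp_conjugate: "1 < p \<Longrightarrow> (p - 1) * (conj_exp p - 1) = 1"
  by (simp add: conj_exp_def field_simps)

lemma inverse_conj_exp: "1 < p \<Longrightarrow> 1 / conj_exp p = 1 - 1 / p"
  by (simp add: conj_exp_def field_simps)

lemma psi_mult: "psi q (a * b) = psi q a * psi q b"
  by (simp add: psi_def abs_mult powr_mult sgn_mult)

lemma psi_sgn: "psi q (sgn a) = sgn a"
  by (simp add: psi_def sgn_if)

lemma psi_psi:
  assumes "(p - 1) * (q - 1) = 1"
  shows "psi q (psi p a) = a"
proof -
  have "psi q (psi p a) = (\<bar>a\<bar> powr (p - 1)) powr (q - 1) * sgn a"
    by (simp add: psi_def abs_mult sgn_mult)
  also have "\<dots> = \<bar>a\<bar> * sgn a"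
    using assms by (cases "a = 0") (simp_all add: powr_powr)
  finally show ?thesis by (simp add: abs_mult_sgn)
qed

lemma mult_psi_self: "0 < p \<Longrightarrow> a * psi p a = \<bar>a\<bar> powr p"
  by (cases "a = 0") (auto simp: psi_def sgn_if powr_diff)

lemma finite_tidx: "finite (tidx m d)"
  by (simp add: tidx_def finite_PiE)

definition mlf_coeff :: "nat \<Rightarrow> (nat \<Rightarrow> nat) \<Rightarrow> ((nat \<Rightarrow> nat) \<Rightarrow> real) \<Rightarrow> (nat \<Rightarrow> nat \<Rightarrow> real) \<Rightarrow> nat \<Rightarrow> nat \<Rightarrow> real" where
  "mlf_coeff m d f x i k = (\<Sum>j\<in>{j\<in>tidx m d. j i = k}. f j * (\<Prod>i'\<in>{..<m} - {i}. x i' (j i')))"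

lemma mlf_fun_upd:
  assumes "i < m"
  shows "mlf m d f (x(i := v)) = (\<Sum>k<d i. v k * mlf_coeff m d f x i k)"
proof -
  have "mlf m d f (x(i := v)) = (\<Sum>j\<in>tidx m d. v (j i) * (f j * (\<Prod>i'\<in>{..<m} - {i}. x i' (j i'))))"
    unfolding mlf_def using assms by (intro sum.cong refl) (simp add: prod.remove[of _ i])
  also have "\<dots> = (\<Sum>k<d i. \<Sum>j\<in>{j\<in>tidx m d. j i = k}. v (j i) * (f j * (\<Prod>i'\<in>{..<m} - {i}. x i' (j i'))))"
    using assms by (intro sum.group[symmetric]) (auto simp: finite_tidx tidx_def finite_PiE)
  also have "\<dots> = (\<Sum>k<d i. v k * mlf_coeff m d f x i k)"
    unfolding mlf_coeff_def sum_distrib_left by (intro sum.cong refl) auto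
  finally show ?thesis .
qed

lemma mlf_eq_sum_mlf_coeff: "i < m \<Longrightarrow> mlf m d f x = (\<Sum>k<d i. x i k * mlf_coeff m d f x i k)"
  using mlf_fun_upd[of i m d f x "x i"] by simp

lemma mlf_fun_upd_has_real_derivative:
  assumes "i < m" "l < d i"
  shows "((\<lambda>t. mlf m d f (x(i := (x i)(l := t)))) has_real_derivative mlf_coeff m d f x i l) (at s)"
proof -
  define A where "A = (\<Sum>k\<in>{..<d i} - {l}. x i k * mlf_coeff m d f x i k)"
  have "mlf m d f (x(i := (x i)(l := t))) = t * mlf_coeff m d f x i l + A" for t
    unfolding mlf_fun_upd[OF assms(1)] A_def using assms(2)
    by (subst sum.remove[of _ l]) (auto intro!: sum.cong)
  moreover have "((\<lambda>t. t * mlf_coeff m d f x i l + A) has_real_derivative mlf_coeff m d f x i l) (at s)"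
    by (auto intro!: derivative_eq_intros)
  ultimately show ?thesis
    by simp
qed

lemma pder_eq_mlf_coeff: "i < m \<Longrightarrow> l < d i \<Longrightarrow> pder m d f i l x = mlf_coeff m d f x i l"
  unfolding pder_def by (rule DERIV_imp_deriv[OF mlf_fun_upd_has_real_derivative])

lemma continuous_on_coordinate: "continuous_on S (\<lambda>x::nat \<Rightarrow> nat \<Rightarrow> real. x i l)"
  using continuous_on_product_then_coordinatewise[OF continuous_on_id, of S i]
  by (rule continuous_on_product_then_coordinatewise)

lemma continuous_on_mlf: "continuous_on S (mlf m d f)"
  unfolding mlf_def[abs_def]
  by (intro continuous_on_sum continuous_on_mult continuous_on_prod continuous_on_const
      continuous_on_coordinate)

lemma pnorm_eq_1_iff: "0 < p \<Longrightarrow> pnorm p n y = 1 \<longleftrightarrow> (\<Sum>l<n. \<bar>y l\<bar> powr p) = 1"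
proof
  assume "0 < p" "pnorm p n y = 1"
  moreover have "(\<Sum>l<n. \<bar>y l\<bar> powr p) = pnorm p n y powr p"
    unfolding pnorm_def using \<open>0 < p\<close> by (simp add: powr_powr sum_nonneg)
  ultimately show "(\<Sum>l<n. \<bar>y l\<bar> powr p) = 1" by simp
qed (simp add: pnorm_def)

lemma abs_le_1_if_sum_powr_eq_1:
  fixes y :: "nat \<Rightarrow> real"
  assumes "(\<Sum>l<n. \<bar>y l\<bar> powr p) = 1" "l < n" "0 < p"
  shows "\<bar>y l\<bar> \<le> 1"
proof (rule ccontr)
  assume "\<not> \<bar>y l\<bar> \<le> 1"
  then have "1 < \<bar>y l\<bar> powr p" using assms(3) by simp
  moreover have "\<bar>y l\<bar> powr p \<le> (\<Sum>l<n. \<bar>y l\<bar> powr p)"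
    using assms(2) by (intro member_le_sum) auto
  ultimately show False using assms(1) by simp
qed

lemma sum_abs_le_powr_inverse_conj_exp:
  fixes y :: "nat \<Rightarrow> real"
  assumes "1 < p" "(\<Sum>l<n. \<bar>y l\<bar> powr p) = 1" "0 < n"
  shows "(\<Sum>l<n. \<bar>y l\<bar>) \<le> real n powr (1 / conj_exp p)"
proof -
  define q where "q = conj_exp p"
  have q: "1 < q" "1 / p + 1 / q = 1"
    using assms(1) by (simp_all add: q_def conj_exp_gt_1 inverse_conj_exp)
  \<comment> \<open>H\<ouml>lder against the all-ones vector, via Young's inequality with \<open>n * b powr q = 1\<close>.\<close>
  define b where "b = real n powr (- (1 / q))"
  have b: "0 < b" "real n * b powr q = 1"
    using assms(3) q(1) by (simp_all add: b_def powr_powr)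
  have "b * (\<Sum>l<n. \<bar>y l\<bar>) = (\<Sum>l<n. \<bar>y l\<bar> * b)"
    by (simp add: sum_distrib_left mult.commute)
  also have "\<dots> \<le> (\<Sum>l<n. \<bar>y l\<bar> powr p / p + b powr q / q)"
    using assms(1) q b(1) by (intro sum_mono Youngs_inequality) auto
  also have "\<dots> = (\<Sum>l<n. \<bar>y l\<bar> powr p) / p + real n * b powr q / q"
    by (simp add: sum.distrib sum_divide_distrib)
  also have "\<dots> = 1"
    using assms(2) q(2) b(2) by simp
  finally have "(\<Sum>l<n. \<bar>y l\<bar>) \<le> 1 / b"
    using b(1) by (simp add: field_simps)
  also have "1 / b = real n powr (1 / q)"
    by (simp add: b_def powr_minus divide_inverse)
  finally show ?thesis by (simp add: q_def)
qed

lemma has_real_derivative_abs_powr: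
  fixes c P :: real
  assumes "1 < P"
  shows "((\<lambda>u. \<bar>u\<bar> powr P) has_real_derivative P * psi P c) (at c)"
proof (cases "c = 0")
  case True
  have "((\<lambda>h. \<bar>h\<bar> powr (P - 1)) \<longlongrightarrow> \<bar>0\<bar> powr (P - 1)) (at (0::real))"
    using assms by (intro tendsto_intros) auto
  then have lim: "((\<lambda>h. \<bar>h\<bar> powr (P - 1)) \<longlongrightarrow> 0) (at (0::real))"
    using assms by simp
  have "norm ((\<bar>0 + h\<bar> powr P - \<bar>0\<bar> powr P) / h) \<le> \<bar>h\<bar> powr (P - 1)" for h :: real
    using assms by (cases "h = 0") (simp_all add: powr_diff)
  then have "((\<lambda>h. (\<bar>0 + h\<bar> powr P - \<bar>0\<bar> powr P) / h) \<longlongrightarrow> 0) (at (0::real))"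
    by (intro Lim_null_comparison[OF always_eventually lim]) simp
  with True show ?thesis by (simp add: DERIV_def psi_def)
next
  case False
  \<comment> \<open>Away from 0, \<open>\<bar>u\<bar> powr P = (u\<^sup>2) powr (P/2)\<close> is a composition of smooth maps.\<close>
  have abs_powr: "\<bar>u\<bar> powr P = (u\<^sup>2) powr (P / 2)" for u :: real
  proof -
    have "(\<bar>u\<bar> powr 2) powr (P / 2) = \<bar>u\<bar> powr P"
      by (simp only: powr_powr) simp
    then show ?thesis
      by (cases "u = 0") simp_all
  qed
  have "((\<lambda>u. (u\<^sup>2) powr (P / 2)) has_real_derivative
          (c\<^sup>2) powr (P / 2) * (0 * ln (c\<^sup>2) + 2 * c * (P / 2) / c\<^sup>2)) (at c)"
    using False by (intro DERIV_powr derivative_eq_intros) auto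
  moreover have "(c\<^sup>2) powr (P / 2) * (0 * ln (c\<^sup>2) + 2 * c * (P / 2) / c\<^sup>2) = P * psi P c"
  proof -
    have "(c\<^sup>2) powr (P / 2) = \<bar>c\<bar> * \<bar>c\<bar> powr (P - 1)"
      using False by (simp add: powr_diff flip: abs_powr)
    then show ?thesis
      using False by (simp add: psi_def sgn_if power2_eq_square field_simps)
  qed
  ultimately show ?thesis
    by (simp only: abs_powr)
qed

lemma pnorm_fun_upd_has_real_derivative:
  fixes y :: "nat \<Rightarrow> real"
  assumes "1 < p" "l < n" "(\<Sum>k<n. \<bar>y k\<bar> powr p) = 1"
  shows "((\<lambda>t. pnorm p n (y(l := t))) has_real_derivative psi p (y l)) (at (y l))"
proof -
  define R where "R = (\<Sum>k\<in>{..<n} - {l}. \<bar>y k\<bar> powr p)"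
  have sum_upd: "(\<Sum>k<n. \<bar>(y(l := t)) k\<bar> powr p) = \<bar>t\<bar> powr p + R" for t
    unfolding R_def using assms(2) by (subst sum.remove[of _ l]) (auto intro!: sum.cong)
  have at_yl: "\<bar>y l\<bar> powr p + R = 1"
    using sum_upd[of "y l"] assms(3) by simp
  have "((\<lambda>t. \<bar>t\<bar> powr p + R) has_real_derivative p * psi p (y l)) (at (y l))"
    using DERIV_add[OF has_real_derivative_abs_powr[OF assms(1)] DERIV_const] by simp
  then have "((\<lambda>t. (\<bar>t\<bar> powr p + R) powr (1 / p)) has_real_derivative
      (\<bar>y l\<bar> powr p + R) powr (1 / p) * (0 * ln (\<bar>y l\<bar> powr p + R) + p * psi p (y l) * (1 / p) / (\<bar>y l\<bar> powr p + R)))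
      (at (y l))"
    by (rule DERIV_powr[OF _ _ DERIV_const]) (simp add: at_yl)
  moreover have "pnorm p n (y(l := t)) = (\<bar>t\<bar> powr p + R) powr (1 / p)" for t
    by (simp only: pnorm_def sum_upd)
  ultimately show ?thesis
    using assms(1) by (simp add: at_yl)
qed

section \<open>Maximizers are critical points\<close>

definition supp_box :: "nat \<Rightarrow> (nat \<Rightarrow> nat) \<Rightarrow> (nat \<Rightarrow> nat \<Rightarrow> real) set" where
  "supp_box m d = {x. \<forall>i l. x i l \<in> (if i < m \<and> l < d i then {-1..1} else {0})}"

text \<open>Unlike \<^const>\<open>sphere_set\<close>, this set constrains the coordinates outside the index
  range to vanish, which makes it compact.\<close>
definition supp_sphere :: "nat \<Rightarrow> (nat \<Rightarrow> nat) \<Rightarrow> (nat \<Rightarrow> real) \<Rightarrow> (nat \<Rightarrow> nat \<Rightarrow> real) set" where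
  "supp_sphere m d p = supp_box m d \<inter> (\<Inter>k\<in>{..<m}. {x. (\<Sum>l<d k. \<bar>x k l\<bar> powr p k) = 1})"

lemma compact_supp_box: "compact (supp_box m d)"
proof -
  define C where "C i l = (if i < m \<and> l < d i then {-1..1::real} else {0})" for i l
  have "compact (PiE UNIV (C i))" for i
    using compactin_PiE[of "\<lambda>_. euclidean" UNIV "C i"]
    by (auto simp: C_def euclidean_product_topology)
  then have "compact (PiE UNIV (\<lambda>i. PiE UNIV (C i)))"
    using compactin_PiE[of "\<lambda>_. euclidean" UNIV "\<lambda>i. PiE UNIV (C i)"]
    by (simp add: euclidean_product_topology)
  moreover have "PiE UNIV (\<lambda>i. PiE UNIV (C i)) = supp_box m d"
    unfolding supp_box_def C_def
    by (rule set_eqI) (simp only: PiE_iff mem_Collect_eq extensional_UNIV ball_UNIV UNIV_I simp_thms)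
  ultimately show ?thesis by simp
qed

lemma compact_supp_sphere:
  assumes "\<forall>k<m. 0 < p k"
  shows "compact (supp_sphere m d p)"
  unfolding supp_sphere_def
proof (intro compact_Int_closed compact_supp_box closed_INT ballI closed_Collect_eq)
  fix k assume "k \<in> {..<m}"
  then show "continuous_on UNIV (\<lambda>x::nat \<Rightarrow> nat \<Rightarrow> real. \<Sum>l<d k. \<bar>x k l\<bar> powr p k)"
    using assms by (intro continuous_on_sum continuous_on_powr' continuous_on_rabs
        continuous_on_coordinate continuous_on_const) auto
qed auto

lemma mem_sphere_set_iff:
  "\<forall>k<m. 0 < p k \<Longrightarrow> x \<in> sphere_set m d p \<longleftrightarrow> (\<forall>k<m. (\<Sum>l<d k. \<bar>x k l\<bar> powr p k) = 1)"
  by (simp add: sphere_set_def pnorm_eq_1_iff)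

lemma supp_sphere_subset_sphere_set:
  "\<forall>k<m. 0 < p k \<Longrightarrow> supp_sphere m d p \<subseteq> sphere_set m d p"
  by (auto simp: supp_sphere_def mem_sphere_set_iff)

lemma supp_sphere_vanishes: "x \<in> supp_sphere m d p \<Longrightarrow> d i \<le> l \<Longrightarrow> x i l = 0"
  unfolding supp_sphere_def supp_box_def by (auto dest!: spec2[of _ i l])

lemma fun_upd_in_supp_sphere:
  assumes "x \<in> supp_sphere m d p" "i < m" "0 < p i"
    and "(\<Sum>l<d i. \<bar>w l\<bar> powr p i) = 1" "\<forall>l\<ge>d i. w l = 0"
  shows "x(i := w) \<in> supp_sphere m d p"
  using assms abs_le_1_if_sum_powr_eq_1[OF assms(4) _ assms(3)]
  by (auto simp: supp_sphere_def supp_box_def abs_le_iff not_less)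

lemma mlf_fun_upd_le_at_max:
  assumes "i < m" "0 < p i" "x \<in> supp_sphere m d p"
    and max: "\<forall>y\<in>supp_sphere m d p. mlf m d f y \<le> mlf m d f x"
    and v: "\<forall>l\<ge>d i. v l = 0"
  shows "mlf m d f (x(i := v)) \<le> mlf m d f x * pnorm (p i) (d i) v"
proof -
  define S where "S = (\<Sum>l<d i. \<bar>v l\<bar> powr p i)"
  define N where "N = pnorm (p i) (d i) v"
  have N: "N = S powr (1 / p i)"
    by (simp add: N_def S_def pnorm_def)
  show ?thesis
  proof (cases "S = 0")
    case True
    then have "\<forall>l<d i. v l = 0"
      unfolding S_def by (subst (asm) sum_nonneg_eq_0_iff) auto
    then show ?thesis
      using True by (simp add: mlf_fun_upd[OF assms(1)] N flip: N_def)
  next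
    case False
    then have "0 < S"
      unfolding S_def by (metis order_le_less powr_ge_zero sum_nonneg)
    then have "0 < N" "N powr p i = S"
      using assms(2) by (simp_all add: N powr_powr)
    \<comment> \<open>By homogeneity it suffices to compare with the normalized row \<open>v / N\<close>.\<close>
    define w where "w l = v l / N" for l
    have "(\<Sum>l<d i. \<bar>w l\<bar> powr p i) = S / N powr p i"
      using \<open>0 < N\<close> by (simp add: w_def S_def powr_divide sum_divide_distrib)
    then have "x(i := w) \<in> supp_sphere m d p"
      using \<open>0 < S\<close> \<open>N powr p i = S\<close> v assms(1-3)
      by (intro fun_upd_in_supp_sphere) (auto simp: w_def)
    then have "mlf m d f (x(i := w)) \<le> mlf m d f x"
      using max by blast
    moreover have "mlf m d f (x(i := w)) = mlf m d f (x(i := v)) / N"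
      by (simp add: mlf_fun_upd[OF assms(1)] w_def sum_divide_distrib)
    ultimately show ?thesis
      using \<open>0 < N\<close> by (simp add: N_def pos_divide_le_eq mult.commute)
  qed
qed

lemma mlf_coeff_at_max:
  assumes "i < m" "l < d i" "1 < p i" "x \<in> supp_sphere m d p"
    and max: "\<forall>y\<in>supp_sphere m d p. mlf m d f y \<le> mlf m d f x"
  shows "mlf_coeff m d f x i l = mlf m d f x * psi (p i) (x i l)"
proof -
  define F where "F = mlf m d f x"
  define h where "h t = F * pnorm (p i) (d i) ((x i)(l := t)) - mlf m d f (x(i := (x i)(l := t)))"
    for t
  have row: "(\<Sum>k<d i. \<bar>x i k\<bar> powr p i) = 1"
    using assms(1,4) by (simp add: supp_sphere_def)
  have h_nonneg: "0 \<le> h t" for t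
    using mlf_fun_upd_le_at_max[OF assms(1) _ assms(4) max, of "(x i)(l := t)"] assms(2,3)
      supp_sphere_vanishes[OF assms(4)]
    by (simp add: h_def F_def)
  have "h (x i l) = 0"
    using row assms(3) by (simp add: h_def F_def pnorm_eq_1_iff)
  moreover have "(h has_real_derivative F * psi (p i) (x i l) - mlf_coeff m d f x i l) (at (x i l))"
    unfolding h_def[abs_def]
    by (intro DERIV_diff DERIV_cmult pnorm_fun_upd_has_real_derivative[OF assms(3,2) row]
        mlf_fun_upd_has_real_derivative[of i m l d f x, OF assms(1,2)])
  ultimately have "F * psi (p i) (x i l) - mlf_coeff m d f x i l = 0"
    using h_nonneg by (intro DERIV_local_min[of h _ _ 1]) auto
  then show ?thesis by (simp add: F_def)
qed

lemma max_mlf_in_crit_vals: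
  assumes "\<forall>k<m. 1 < p k" "x \<in> supp_sphere m d p"
    and max: "\<forall>y\<in>supp_sphere m d p. mlf m d f y \<le> mlf m d f x"
    and pos: "0 < mlf m d f x"
  shows "mlf m d f x \<in> crit_vals m d p f"
proof -
  define F where "F = mlf m d f x"
  have "sigma m d p f i x l = psi (conj_exp (p i)) F * x i l" if "i < m" "l < d i" for i l
  proof -
    have "sigma m d p f i x l = psi (conj_exp (p i)) (mlf_coeff m d f x i l)"
      using pos that by (simp add: sigma_def pder_eq_mlf_coeff)
    also have "\<dots> = psi (conj_exp (p i)) (F * psi (p i) (x i l))"
      using mlf_coeff_at_max[OF that _ assms(2) max] assms(1) that by (simp add: F_def)
    also have "\<dots> = psi (conj_exp (p i)) F * x i l"
      using assms(1) that by (simp add: psi_mult psi_psi[OF conj_exp_conjugate])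
    finally show ?thesis .
  qed
  moreover have "x \<in> sphere_set m d p"
    using supp_sphere_subset_sphere_set[of m p d] assms(1,2) by force
  ultimately show ?thesis
    using pos by (auto simp: crit_vals_def F_def)
qed

lemma exists_supp_sphere_mlf_eq_abs:
  assumes "0 < m" "\<forall>k<m. 0 < p k" "j0 \<in> tidx m d"
  shows "\<exists>u\<in>supp_sphere m d p. mlf m d f u = \<bar>f j0\<bar>"
proof -
  have j0: "j0 i < d i" if "i < m" for i
    using assms(3) that by (auto simp: tidx_def)
  define s :: real where "s = (if f j0 < 0 then -1 else 1)"
  \<comment> \<open>The tensor product of unit vectors at the entries of \<open>j0\<close>, with sign \<open>s\<close> in the first factor.\<close>
  define u where "u i l = (if i < m \<and> l = j0 i then if i = 0 then s else 1 else 0)" for i l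
  have "(\<Sum>l<d k. \<bar>u k l\<bar> powr p k) = 1" if "k < m" for k
  proof -
    have "(\<Sum>l<d k. \<bar>u k l\<bar> powr p k) = (\<Sum>l<d k. if l = j0 k then 1 else 0)"
      using that assms(2) by (intro sum.cong) (auto simp: u_def s_def)
    then show ?thesis
      using j0[OF that] by simp
  qed
  moreover have "u \<in> supp_box m d"
    using j0 by (auto simp: supp_box_def u_def s_def)
  ultimately have "u \<in> supp_sphere m d p"
    by (simp add: supp_sphere_def)
  have prod_u: "(\<Prod>i<m. u i (j i)) = (if j = j0 then s else 0)"
    if "j \<in> tidx m d" for j
  proof (cases "j = j0")
    case True
    have "(\<Prod>i<m. u i (j0 i)) = (\<Prod>i<m. if i = 0 then s else 1)"
      by (intro prod.cong) (auto simp: u_def)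
    then show ?thesis
      using True assms(1) by simp
  next
    case False
    have "\<not> (\<forall>i<m. j i = j0 i)"
      using False PiE_ext[of j "{..<m}" "\<lambda>i. {..<d i}" j0] that assms(3) by (auto simp: tidx_def)
    then obtain i where "i < m" "j i \<noteq> j0 i"
      by blast
    then have "(\<Prod>i<m. u i (j i)) = 0"
      by (intro prod_zero bexI[of _ i]) (simp_all add: u_def)
    then show ?thesis
      using False by simp
  qed
  have "mlf m d f u = (\<Sum>j\<in>tidx m d. if j = j0 then f j0 * s else 0)"
    unfolding mlf_def by (intro sum.cong) (auto simp: prod_u)
  also have "\<dots> = \<bar>f j0\<bar>"
    using assms(3) by (simp add: finite_tidx s_def)
  finally show ?thesis
    using \<open>u \<in> supp_sphere m d p\<close> by blast
qed

section \<open>Bounds on critical values\<close>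

lemma crit_val_eq_abs_mlf:
  assumes "i < m" "1 < p i" "(\<Sum>l<d i. \<bar>x i l\<bar> powr p i) = 1"
    and crit: "\<forall>l<d i. sigma m d p f i x l = psi (conj_exp (p i)) lam * x i l"
  shows "lam = \<bar>mlf m d f x\<bar>"
proof -
  define F where "F = mlf m d f x"
  have conj: "(conj_exp (p i) - 1) * (p i - 1) = 1"
    using conj_exp_conjugate[OF assms(2)] by (simp add: mult.commute)
  have coeff: "sgn F * mlf_coeff m d f x i l = lam * psi (p i) (x i l)" if "l < d i" for l
  proof -
    have "sgn F * psi (conj_exp (p i)) (mlf_coeff m d f x i l) = psi (conj_exp (p i)) lam * x i l"
      using crit that assms(1) by (simp add: sigma_def F_def pder_eq_mlf_coeff)
    then have "psi (p i) (sgn F * psi (conj_exp (p i)) (mlf_coeff m d f x i l))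
        = psi (p i) (psi (conj_exp (p i)) lam * x i l)"
      by simp
    then show ?thesis
      by (simp only: psi_mult psi_sgn psi_psi[OF conj])
  qed
  have "lam = lam * (\<Sum>l<d i. x i l * psi (p i) (x i l))"
    using assms(2,3) by (simp add: mult_psi_self)
  also have "\<dots> = (\<Sum>l<d i. x i l * (lam * psi (p i) (x i l)))"
    by (simp add: sum_distrib_left algebra_simps)
  also have "\<dots> = (\<Sum>l<d i. x i l * (sgn F * mlf_coeff m d f x i l))"
    using coeff by simp
  also have "\<dots> = sgn F * (\<Sum>l<d i. x i l * mlf_coeff m d f x i l)"
    by (simp add: sum_distrib_left algebra_simps)
  also have "\<dots> = sgn F * F"
    by (simp add: F_def mlf_eq_sum_mlf_coeff[OF assms(1)])
  finally show ?thesis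
    by (auto simp: F_def sgn_if)
qed

lemma abs_mlf_le_mlf_abs:
  assumes "i < m" "\<forall>k<m. \<forall>l<d k. \<bar>x k l\<bar> \<le> 1"
  shows "\<bar>mlf m d f x\<bar> \<le> mlf m d (\<lambda>j. \<bar>f j\<bar>) ((\<lambda>_ _. 1)(i := \<lambda>l. \<bar>x i l\<bar>))"
proof -
  have "\<bar>mlf m d f x\<bar> \<le> (\<Sum>j\<in>tidx m d. \<bar>f j\<bar> * (\<Prod>k<m. \<bar>x k (j k)\<bar>))"
    unfolding mlf_def by (rule order.trans[OF sum_abs]) (simp add: abs_mult abs_prod)
  also have "\<dots> \<le> (\<Sum>j\<in>tidx m d. \<bar>f j\<bar> * (\<Prod>k<m. ((\<lambda>_ _. 1)(i := \<lambda>l. \<bar>x i l\<bar>)) k (j k)))"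
  proof (intro sum_mono mult_left_mono)
    fix j assume j: "j \<in> tidx m d"
    have "(\<Prod>k\<in>{..<m} - {i}. \<bar>x k (j k)\<bar>) \<le> 1"
      using j assms(2) by (intro prod_le_1) (auto simp: tidx_def)
    then show "(\<Prod>k<m. \<bar>x k (j k)\<bar>) \<le> (\<Prod>k<m. ((\<lambda>_ _. 1)(i := \<lambda>l. \<bar>x i l\<bar>)) k (j k))"
      using assms(1) by (simp add: prod.remove[of _ i] mult_left_le)
  qed simp
  finally show ?thesis
    by (simp add: mlf_def)
qed

lemma abs_mlf_le_Max_pder_abs:
  assumes "i < m" "0 < d i" "\<forall>k<m. 1 < p k"
    and rows: "\<forall>k<m. (\<Sum>l<d k. \<bar>x k l\<bar> powr p k) = 1"
  shows "\<bar>mlf m d f x\<bar> \<le> Max ((\<lambda>l. real (d i) powr (1 / conj_exp (p i))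
                 * pder m d (\<lambda>j. \<bar>f j\<bar>) i l (\<lambda>_ _. 1)) ` {..<d i})"
proof -
  define D where "D = real (d i) powr (1 / conj_exp (p i))"
  define c where "c l = mlf_coeff m d (\<lambda>j. \<bar>f j\<bar>) (\<lambda>_ _. 1) i l" for l
  obtain l0 where l0: "l0 < d i" "\<forall>l<d i. c l \<le> c l0"
    using Max_in[of "c ` {..<d i}"] Max_ge[of "c ` {..<d i}"] assms(2) by fastforce
  have "\<bar>mlf m d f x\<bar> \<le> mlf m d (\<lambda>j. \<bar>f j\<bar>) ((\<lambda>_ _. 1)(i := \<lambda>l. \<bar>x i l\<bar>))"
    using rows assms(3) abs_le_1_if_sum_powr_eq_1
    by (intro abs_mlf_le_mlf_abs[OF assms(1)]) fastforce
  also have "\<dots> = (\<Sum>l<d i. \<bar>x i l\<bar> * c l)"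
    by (simp add: mlf_fun_upd[OF assms(1)] c_def)
  also have "\<dots> \<le> (\<Sum>l<d i. \<bar>x i l\<bar> * c l0)"
    using l0(2) by (intro sum_mono mult_left_mono) auto
  also have "\<dots> = (\<Sum>l<d i. \<bar>x i l\<bar>) * c l0"
    by (simp add: sum_distrib_right)
  also have "\<dots> \<le> D * c l0"
  proof (rule mult_right_mono)
    show "(\<Sum>l<d i. \<bar>x i l\<bar>) \<le> D"
      using sum_abs_le_powr_inverse_conj_exp assms rows by (simp add: D_def)
    show "0 \<le> c l0"
      by (simp add: c_def mlf_coeff_def sum_nonneg)
  qed
  also have "\<dots> \<le> Max ((\<lambda>l. D * pder m d (\<lambda>j. \<bar>f j\<bar>) i l (\<lambda>_ _. 1)) ` {..<d i})"
    using l0(1) assms(1) by (intro Max_ge) (auto simp: c_def pder_eq_mlf_coeff)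
  finally show ?thesis
    by (simp add: D_def)
qed

lemma crit_vals_bounds:
  assumes "0 < m" "\<forall>i<m. 0 < d i" "\<forall>i<m. 1 < p i" "lam \<in> crit_vals m d p f"
  shows "0 < lam \<and> lam \<le> Min ((\<lambda>i. Max ((\<lambda>l. real (d i) powr (1 / conj_exp (p i))
                 * pder m d (\<lambda>j. \<bar>f j\<bar>) i l (\<lambda>_ _. 1)) ` {..<d i})) ` {..<m})"
proof -
  obtain x where "lam \<noteq> 0" and x: "x \<in> sphere_set m d p"
    and crit: "\<forall>i<m. \<forall>l<d i. sigma m d p f i x l = psi (conj_exp (p i)) lam * x i l"
    using assms(4) unfolding crit_vals_def by blast
  have "\<forall>k<m. 0 < p k"
    using assms(3) by force
  then have rows: "\<forall>k<m. (\<Sum>l<d k. \<bar>x k l\<bar> powr p k) = 1"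
    using x by (simp add: mem_sphere_set_iff)
  have "lam = \<bar>mlf m d f x\<bar>"
    using assms(1,3) rows crit by (intro crit_val_eq_abs_mlf[of 0]) auto
  then show ?thesis
    using \<open>lam \<noteq> 0\<close> assms abs_mlf_le_Max_pder_abs[OF _ _ assms(3) rows]
    by (auto intro!: Min.boundedI)
qed

theorem proposition1:
  fixes m :: nat and d :: "nat \<Rightarrow> nat" and p :: "nat \<Rightarrow> real"
    and f :: "(nat \<Rightarrow> nat) \<Rightarrow> real"
  assumes "m \<ge> 1"
    and "\<forall>i<m. d i \<ge> 1"
    and "\<forall>i<m. 1 < p i"
    and "\<exists>j\<in>tidx m d. f j \<noteq> 0"
  shows "crit_vals m d p f \<noteq> {} \<and>
    (\<forall>lam\<in>crit_vals m d p f. 0 < lam \<and>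
       lam \<le> Min ((\<lambda>i. Max ((\<lambda>l. real (d i) powr (1 / conj_exp (p i))
                 * pder m d (\<lambda>j. \<bar>f j\<bar>) i l (\<lambda>_ _. 1)) ` {..<d i})) ` {..<m}))"
proof
  have "0 < m" and p_pos: "\<forall>k<m. 0 < p k"
    using assms(1,3) by force+
  obtain j0 where "j0 \<in> tidx m d" "f j0 \<noteq> 0"
    using assms(4) by blast
  then obtain u where u: "u \<in> supp_sphere m d p" "mlf m d f u = \<bar>f j0\<bar>"
    using exists_supp_sphere_mlf_eq_abs \<open>0 < m\<close> p_pos by blast
  obtain x where x: "x \<in> supp_sphere m d p"
    and max: "\<forall>y\<in>supp_sphere m d p. mlf m d f y \<le> mlf m d f x"
    using continuous_attains_sup[OF compact_supp_sphere[OF p_pos] _ continuous_on_mlf] u(1)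
    by blast
  have "0 < mlf m d f x"
    using max u \<open>f j0 \<noteq> 0\<close> by force
  then show "crit_vals m d p f \<noteq> {}"
    using max_mlf_in_crit_vals[OF assms(3) x max] by blast
next
  show "\<forall>lam\<in>crit_vals m d p f. 0 < lam \<and>
       lam \<le> Min ((\<lambda>i. Max ((\<lambda>l. real (d i) powr (1 / conj_exp (p i))
                 * pder m d (\<lambda>j. \<bar>f j\<bar>) i l (\<lambda>_ _. 1)) ` {..<d i})) ` {..<m})"
    using assms(1-3) by (intro ballI crit_vals_bounds) force+
qed

end
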